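(* Let $s\in(0,1)$ and $0<k<2s$. Then there is a constant $C>0$, independent of $x$, such that $$-(-\Delta)^s\langle x\rangle^k\le C\,\langle x\rangle^{k-2s}\Big(1+\frac{1}{2s}+\frac{1}{2s-k}\Big)\quad\text{for all }x\in\mathbb{R}^d.$$
   Context: $\langle x\rangle=(1+|x|^2)^{1/2}$. The fractional Laplacian is $-(-\Delta)^su(x)=C_{d,s}\,\mathrm{p.v.}\int_{\mathbb{R}^d}\frac{u(y)-u(x)}{|x-y|^{d+2s}}\,dy$ with $C_{d,s}=\frac{2^{2s}\Gamma(d/2+s)}{\pi^{d/2}|\Gamma(-s)|}$. *)

theory Defs
  imports "HOL-Analysis.Analysis"
begin

definition jbracket :: "'a::euclidean_space \<Rightarrow> real" where
  "jbracket x = sqrt (1 + (norm x)^2)"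

definition frac_const :: "nat \<Rightarrow> real \<Rightarrow> real" where
  "frac_const d s = 2 powr (2 * s) * Gamma (real d / 2 + s) / (pi powr (real d / 2) * abs (Gamma (-s)))"

definition frac_trunc :: "real \<Rightarrow> ('a::euclidean_space \<Rightarrow> real) \<Rightarrow> 'a \<Rightarrow> real \<Rightarrow> real" where
  "frac_trunc s u x eps =
     (LINT y:{y. eps < dist x y}|lborel. (u y - u x) / dist x y powr (real DIM('a) + 2 * s))"

text \<open>The minus fractional Laplacian  - (-Delta)^s u (x) = C_{d,s} p.v. integral,
  the principal value being the limit of the truncated integrals as eps tends to 0+.\<close>
definition neg_frac_laplacian :: "real \<Rightarrow> ('a::euclidean_space \<Rightarrow> real) \<Rightarrow> 'a \<Rightarrow> real" where
  "neg_frac_laplacian s u x =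
     frac_const DIM('a) s * Lim (at_right 0) (frac_trunc s u x)"

end

theory Submission
  imports Defs
begin

text \<open>
  Write u = \<langle>.\<rangle>^k and p = d + 2s. Symmetrising the truncated integrals under z \<mapsto> -z turns
  -(-\<Delta>)^s u(x) into C_{d,s}/2 times the absolutely convergent integral of
  (u(x+z) + u(x-z) - 2u(x)) / |z|^p. For |z| \<le> \<langle>x\<rangle>/2 a second order Taylor expansion of
  t \<mapsto> t^(k/2) at t = \<langle>x\<rangle>^2 bounds the second difference by a multiple of \<langle>x\<rangle>^(k-2) |z|^2,
  and for larger |z| it is at most a multiple of |z|^k. Summing over dyadic shells, |z|^(2-p) is
  integrable near the origin because s < 1, and |z|^(k-p) away from it because k < 2s; over
  |z| \<le> \<langle>x\<rangle>/2 and |z| > \<langle>x\<rangle>/2 respectively, both contributions are multiples of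
  \<langle>x\<rangle>^(k-2s). Since 1 + 1/(2s) + 1/(2s-k) \<ge> 1, that factor is absorbed into the constant.
\<close>

lemma jbracket_eq_norm_Pair: "jbracket x = norm (1::real, x)"
  by (simp add: jbracket_def norm_Pair)

lemma jbracket_ge_1: "jbracket x \<ge> 1"
  by (simp add: jbracket_def)

lemma jbracket_pos: "jbracket x > 0"
  using jbracket_ge_1[of x] by simp

lemma norm_le_jbracket: "norm x \<le> jbracket x"
  by (simp add: jbracket_eq_norm_Pair norm_Pair real_le_rsqrt)

lemma jbracket_add_le: "jbracket (x + z) \<le> jbracket x + norm z"
proof -
  have "jbracket (x + z) = norm ((1::real, x) + (0, z))"
    by (simp add: jbracket_eq_norm_Pair)
  also have "\<dots> \<le> norm (1::real, x) + norm (0::real, z)"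
    by (rule norm_triangle_ineq)
  finally show ?thesis
    by (simp add: jbracket_eq_norm_Pair norm_Pair)
qed

lemma jbracket_diff_le: "jbracket x - norm z \<le> jbracket (x + z)"
  using jbracket_add_le[of "x + z" "-z"] by simp

lemma jbracket_power2: "(jbracket x)\<^sup>2 = 1 + (norm x)\<^sup>2"
  by (simp add: jbracket_def)

lemma jbracket_powr_eq: "jbracket x powr k = ((jbracket x)\<^sup>2) powr (k / 2)"
proof -
  have "(jbracket x)\<^sup>2 = jbracket x powr 2"
    using jbracket_pos[of x] by (simp add: powr_numeral)
  then show ?thesis
    by (simp add: powr_powr)
qed

lemma borel_measurable_jbracket [measurable]: "jbracket \<in> borel_measurable borel"
  unfolding jbracket_def[abs_def] by measurable

section \<open>Second differences of powers of the Japanese bracket\<close>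

lemma powr_second_order_taylor:
  fixes a m P Q :: real
  assumes "a \<le> 2" "0 < m" "m \<le> P" "m \<le> Q"
  shows "\<bar>Q powr a - P powr a - a * P powr (a - 1) * (Q - P)\<bar>
           \<le> \<bar>a * (a - 1)\<bar> / 2 * m powr (a - 2) * (Q - P)\<^sup>2"
proof (cases "Q = P")
  case False
  define D where "D n t = (\<Prod>j<n. a - real j) * t powr (a - real n)" for n :: nat and t :: real
  have "DERIV (D n) t :> D (Suc n) t" if "min P Q \<le> t" for n t
  proof -
    have "0 < t"
      using that assms by linarith
    then have "DERIV (D n) t :> (\<Prod>j<n. a - real j) * ((a - real n) * t powr (a - real n - 1))"
      unfolding D_def by (auto intro!: derivative_eq_intros)
    then show ?thesis
      by (simp add: D_def algebra_simps diff_diff_eq)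
  qed
  moreover have "D 0 = (\<lambda>t. t powr a)"
    by (rule ext) (simp add: D_def)
  ultimately obtain t where "if Q < P then Q < t \<and> t < P else P < t \<and> t < Q"
    and taylor: "Q powr a = (\<Sum>n<2. D n P / fact n * (Q - P) ^ n) + D 2 t / fact 2 * (Q - P)\<^sup>2"
    using Taylor[of 2 D "\<lambda>t. t powr a" "min P Q" "max P Q" P Q] False by auto
  then have t: "m \<le> t"
    using assms by (auto split: if_splits)
  have remainder: "Q powr a - P powr a - a * P powr (a - 1) * (Q - P)
      = a * (a - 1) / 2 * t powr (a - 2) * (Q - P)\<^sup>2"
    using taylor by (simp add: D_def numeral_2_eq_2 lessThan_Suc field_simps)
  have "t powr (a - 2) \<le> m powr (a - 2)"
    using t assms by (intro powr_mono2') auto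
  then show ?thesis
    unfolding remainder abs_mult by (auto simp: abs_mult intro!: mult_left_mono mult_right_mono)
qed simp

lemma jbracket_square_increment:
  "(jbracket (x + w))\<^sup>2 - (jbracket x)\<^sup>2 = 2 * (x \<bullet> w) + (norm w)\<^sup>2"
  by (simp add: jbracket_power2 power2_norm_eq_inner inner_add_left inner_add_right inner_commute)

lemma abs_jbracket_square_increment_le:
  assumes "norm w \<le> jbracket x"
  shows "\<bar>(jbracket (x + w))\<^sup>2 - (jbracket x)\<^sup>2\<bar> \<le> 3 * jbracket x * norm w"
proof -
  have "\<bar>x \<bullet> w\<bar> \<le> jbracket x * norm w"
    using Cauchy_Schwarz_ineq2[of x w] norm_le_jbracket[of x]
    by (meson mult_right_mono norm_ge_zero order_trans)
  moreover have "(norm w)\<^sup>2 \<le> jbracket x * norm w"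
    using assms by (simp add: power2_eq_square mult_right_mono)
  ultimately show ?thesis
    using zero_le_power2[of "norm w"] unfolding jbracket_square_increment abs_le_iff by linarith
qed

lemma powr_quarter_square_le:
  fixes L a :: real
  assumes "1 \<le> L" "0 \<le> a"
  shows "(L\<^sup>2 / 4) powr (a - 2) \<le> 16 * L powr (2 * a - 4)"
proof -
  have L_square: "L\<^sup>2 = L powr 2"
    using assms by (simp add: powr_numeral)
  have "(L powr 2) powr (a - 2) = L powr (2 * a - 4)"
    unfolding powr_powr by (simp add: algebra_simps)
  moreover have "inverse (4 powr (a - 2)) = (4::real) powr (2 - a)"
    by (simp add: powr_minus[symmetric])
  ultimately have "(L\<^sup>2 / 4) powr (a - 2) = L powr (2 * a - 4) * 4 powr (2 - a)"
    unfolding L_square powr_divide by (simp only: divide_inverse)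
  also have "\<dots> \<le> L powr (2 * a - 4) * 4 powr 2"
    using assms by (intro mult_left_mono powr_mono) auto
  finally show ?thesis
    by (simp add: mult.commute)
qed

lemma jbracket_powr_taylor_le:
  fixes x w :: "'a::euclidean_space"
  assumes "0 < k" "k < 2" "norm w \<le> jbracket x / 2"
  shows "\<bar>jbracket (x + w) powr k - jbracket x powr k
            - k / 2 * jbracket x powr (k - 2) * ((jbracket (x + w))\<^sup>2 - (jbracket x)\<^sup>2)\<bar>
           \<le> 18 * jbracket x powr (k - 2) * (norm w)\<^sup>2"
proof -
  define L where "L = jbracket x"
  define a where "a = k / 2"
  define m where "m = L\<^sup>2 / 4"
  have L: "1 \<le> L"
    by (simp add: L_def jbracket_ge_1)
  have a: "0 < a" "a < 1"
    using assms(1,2) by (auto simp: a_def)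
  have "\<bar>a * (a - 1)\<bar> = 1 / 4 - (a - 1 / 2)\<^sup>2"
    using a by (simp add: abs_if mult_less_0_iff power2_eq_square algebra_simps)
  then have coeff: "\<bar>a * (a - 1)\<bar> / 2 \<le> 1 / 8"
    by simp
  have "L / 2 \<le> jbracket (x + w)"
    using jbracket_diff_le[of x w] assms(3) by (simp add: L_def)
  then have "m \<le> (jbracket (x + w))\<^sup>2"
    using power_mono[of "L / 2" _ 2] L by (simp add: m_def power_divide)
  moreover have "0 < m" "m \<le> L\<^sup>2"
    using L by (auto simp: m_def)
  moreover have "jbracket y powr k = ((jbracket y)\<^sup>2) powr a" for y :: 'a
    unfolding a_def by (rule jbracket_powr_eq)
  moreover have "L powr (k - 2) = (L\<^sup>2) powr (a - 1)"
    using jbracket_powr_eq[of x "k - 2"] by (simp add: L_def a_def diff_divide_distrib)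
  ultimately have "\<bar>jbracket (x + w) powr k - L powr k - a * L powr (k - 2) * ((jbracket (x + w))\<^sup>2 - L\<^sup>2)\<bar>
      \<le> \<bar>a * (a - 1)\<bar> / 2 * m powr (a - 2) * ((jbracket (x + w))\<^sup>2 - L\<^sup>2)\<^sup>2"
    using powr_second_order_taylor[of a m "L\<^sup>2" "(jbracket (x + w))\<^sup>2"] a by (simp add: L_def)
  also have "\<dots> \<le> 1 / 8 * (16 * L powr (k - 4)) * (3 * L * norm w)\<^sup>2"
  proof (intro mult_mono coeff)
    show "m powr (a - 2) \<le> 16 * L powr (k - 4)"
      using powr_quarter_square_le[of L a] L a by (simp add: m_def a_def)
    have "\<bar>(jbracket (x + w))\<^sup>2 - L\<^sup>2\<bar> \<le> 3 * L * norm w"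
      using abs_jbracket_square_increment_le[of w x] assms(3) jbracket_pos[of x] by (simp add: L_def)
    then show "((jbracket (x + w))\<^sup>2 - L\<^sup>2)\<^sup>2 \<le> (3 * L * norm w)\<^sup>2"
      by (metis abs_ge_zero power2_abs power_mono)
  qed auto
  also have "\<dots> = 18 * (L powr (k - 4) * L\<^sup>2) * (norm w)\<^sup>2"
    by (simp add: power_mult_distrib)
  also have "L powr (k - 4) * L\<^sup>2 = L powr (k - 2)"
    using L powr_add[of L "k - 4" 2] by simp
  finally show ?thesis
    unfolding L_def a_def .
qed

lemma jbracket_powr_second_difference_near:
  fixes x z :: "'a::euclidean_space"
  assumes "0 < k" "k < 2" "norm z \<le> jbracket x / 2"
  shows "\<bar>jbracket (x + z) powr k + jbracket (x - z) powr k - 2 * jbracket x powr k\<bar>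
           \<le> 40 * jbracket x powr (k - 2) * (norm z)\<^sup>2"
proof -
  define L where "L = jbracket x"
  define E where "E w = jbracket (x + w) powr k - L powr k - k / 2 * L powr (k - 2) * ((jbracket (x + w))\<^sup>2 - L\<^sup>2)"
    for w
  have "jbracket (x + z) powr k + jbracket (x - z) powr k - 2 * L powr k
      = E z + E (-z) + k / 2 * L powr (k - 2) * (((jbracket (x + z))\<^sup>2 - L\<^sup>2) + ((jbracket (x - z))\<^sup>2 - L\<^sup>2))"
    by (simp add: E_def algebra_simps)
  also have "\<dots> = E z + E (-z) + k * L powr (k - 2) * (norm z)\<^sup>2"
    using jbracket_square_increment[of x z] jbracket_square_increment[of x "-z"] by (simp add: L_def)
  finally have "jbracket (x + z) powr k + jbracket (x - z) powr k - 2 * L powr k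
      = E z + E (-z) + k * L powr (k - 2) * (norm z)\<^sup>2" .
  moreover have "\<bar>E z\<bar> \<le> 18 * L powr (k - 2) * (norm z)\<^sup>2" "\<bar>E (-z)\<bar> \<le> 18 * L powr (k - 2) * (norm z)\<^sup>2"
    using jbracket_powr_taylor_le[of k z x] jbracket_powr_taylor_le[of k "-z" x] assms
    by (simp_all add: E_def L_def)
  moreover have "0 \<le> k * L powr (k - 2) * (norm z)\<^sup>2" "k * L powr (k - 2) * (norm z)\<^sup>2 \<le> 2 * L powr (k - 2) * (norm z)\<^sup>2"
    using assms(1,2) by (simp_all add: mult_right_mono)
  ultimately show ?thesis
    unfolding L_def abs_le_iff by linarith
qed

lemma jbracket_add_powr_le:
  assumes "0 \<le> k"
  shows "jbracket (x + z) powr k \<le> (jbracket x + norm z) powr k"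
  using jbracket_add_le[of x z] jbracket_pos[of "x + z"] assms by (intro powr_mono2) auto

lemma jbracket_powr_second_difference_far:
  fixes x z :: "'a::euclidean_space"
  assumes "0 \<le> k" "jbracket x / 2 \<le> norm z"
  shows "\<bar>jbracket (x + z) powr k + jbracket (x - z) powr k - 2 * jbracket x powr k\<bar>
           \<le> 2 * (3 * norm z) powr k"
proof -
  have shifted: "jbracket (x + w) powr k \<le> (3 * norm z) powr k" if "norm w = norm z" for w
  proof -
    have "jbracket (x + w) powr k \<le> (jbracket x + norm w) powr k"
      by (rule jbracket_add_powr_le[OF assms(1)])
    also have "\<dots> \<le> (3 * norm z) powr k"
      using that assms jbracket_pos[of x] by (intro powr_mono2) auto
    finally show ?thesis .
  qed
  have "jbracket x powr k \<le> (3 * norm z) powr k"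
    using assms jbracket_pos[of x] by (intro powr_mono2) auto
  moreover have "jbracket (x + z) powr k \<le> (3 * norm z) powr k" "jbracket (x - z) powr k \<le> (3 * norm z) powr k"
    using shifted[of z] shifted[of "-z"] by simp_all
  moreover have "0 \<le> jbracket x powr k" "0 \<le> jbracket (x + z) powr k" "0 \<le> jbracket (x - z) powr k"
    by simp_all
  ultimately show ?thesis
    unfolding abs_le_iff by linarith
qed

lemma jbracket_powr_difference_le:
  fixes x z :: "'a::euclidean_space"
  assumes "0 \<le> k" "0 < eps" "eps \<le> norm z"
  shows "\<bar>jbracket (x + z) powr k - jbracket x powr k\<bar> \<le> ((jbracket x / eps + 1) * norm z) powr k"
proof -
  have "jbracket x = jbracket x / eps * eps"
    using assms by simp
  also have "\<dots> \<le> jbracket x / eps * norm z"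
    using assms jbracket_pos[of x] by (intro mult_left_mono) auto
  finally have bound: "jbracket x + norm z \<le> (jbracket x / eps + 1) * norm z"
    by (simp add: algebra_simps)
  have "jbracket (x + z) powr k \<le> (jbracket x + norm z) powr k"
    by (rule jbracket_add_powr_le[OF assms(1)])
  also have "\<dots> \<le> ((jbracket x / eps + 1) * norm z) powr k"
    using bound jbracket_pos[of x] assms(1) by (intro powr_mono2) auto
  finally have "jbracket (x + z) powr k \<le> ((jbracket x / eps + 1) * norm z) powr k" .
  moreover have "jbracket x powr k \<le> ((jbracket x / eps + 1) * norm z) powr k"
    using bound norm_ge_zero[of z] jbracket_pos[of x] assms(1) by (intro powr_mono2) linarith+
  moreover have "0 \<le> jbracket x powr k" "0 \<le> jbracket (x + z) powr k"
    by simp_all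
  ultimately show ?thesis
    unfolding abs_le_iff by linarith
qed

section \<open>Integrals of powers of the norm over dyadic shells\<close>

lemma powr_le_on_dyadic_shell:
  fixes a t q :: real
  assumes "0 < a" "a < t" "t \<le> 2 * a"
  shows "t powr (-q) \<le> 2 powr \<bar>q\<bar> * a powr (-q)"
proof -
  have "t powr (-q) = a powr (-q) * (t / a) powr (-q)"
    using assms by (simp add: powr_divide)
  moreover have "(t / a) powr (-q) \<le> 2 powr \<bar>q\<bar>"
  proof (cases "0 \<le> q")
    case True
    have "(t / a) powr (-q) \<le> 1 powr (-q)"
      using assms True by (intro powr_mono2') (auto simp: field_simps)
    also have "\<dots> \<le> 2 powr \<bar>q\<bar>"
      by (simp add: ge_one_powr_ge_zero)
    finally show ?thesis .
  next
    case False
    have "(t / a) powr (-q) \<le> 2 powr (-q)"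
      using assms False by (intro powr_mono2) (auto simp: field_simps)
    then show ?thesis
      using False by simp
  qed
  ultimately show ?thesis
    by (simp add: mult_left_mono mult.commute)
qed

definition dyadic_shell_const :: "nat \<Rightarrow> real \<Rightarrow> real" where
  "dyadic_shell_const d q = 2 powr \<bar>q\<bar> * unit_ball_vol d * 2 ^ d"

lemma nn_integral_powr_dyadic_shell_le:
  fixes a q :: real
  assumes "0 < a"
  shows "(\<integral>\<^sup>+z. ennreal (indicator {z::'a::euclidean_space. a < norm z \<and> norm z \<le> 2 * a} z * norm z powr (-q)) \<partial>lborel)
           \<le> ennreal (dyadic_shell_const DIM('a) q * a powr (real DIM('a) - q))"
proof -
  let ?c = "2 powr \<bar>q\<bar> * a powr (-q)"
  have "(\<integral>\<^sup>+z. ennreal (indicator {z::'a. a < norm z \<and> norm z \<le> 2 * a} z * norm z powr (-q)) \<partial>lborel)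
      \<le> (\<integral>\<^sup>+z. ennreal ?c * indicator (cball (0::'a) (2 * a)) z \<partial>lborel)"
    using assms powr_le_on_dyadic_shell[of a _ q]
    by (intro nn_integral_mono) (auto simp: indicator_def intro!: ennreal_leI)
  also have "\<dots> = ennreal ?c * emeasure lborel (cball (0::'a) (2 * a))"
    by (rule nn_integral_cmult_indicator) auto
  also have "\<dots> = ennreal (?c * (unit_ball_vol DIM('a) * (2 * a) ^ DIM('a)))"
    using assms by (simp add: emeasure_cball ennreal_mult)
  also have "?c * (unit_ball_vol DIM('a) * (2 * a) ^ DIM('a))
      = 2 powr \<bar>q\<bar> * unit_ball_vol DIM('a) * 2 ^ DIM('a) * (a powr (-q) * a powr real DIM('a))"
    using assms by (simp add: power_mult_distrib powr_realpow)
  also have "a powr (-q) * a powr real DIM('a) = a powr (real DIM('a) - q)"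
    by (simp add: powr_add[symmetric])
  finally show ?thesis
    unfolding dyadic_shell_const_def .
qed

lemma nn_integral_indicator_le_suminf:
  fixes f :: "'a \<Rightarrow> real"
  assumes [measurable]: "f \<in> borel_measurable M" "\<And>n. S n \<in> sets M"
    and cover: "R \<subseteq> (\<Union>n. S n)"
  shows "(\<integral>\<^sup>+x. ennreal (indicator R x * f x) \<partial>M)
           \<le> (\<Sum>n. \<integral>\<^sup>+x. ennreal (indicator (S n) x * f x) \<partial>M)"
proof -
  have "(\<integral>\<^sup>+x. ennreal (indicator R x * f x) \<partial>M)
      \<le> (\<integral>\<^sup>+x. (\<Sum>n. ennreal (indicator (S n) x * f x)) \<partial>M)"
  proof (intro nn_integral_mono)
    fix x
    show "ennreal (indicator R x * f x) \<le> (\<Sum>n. ennreal (indicator (S n) x * f x))"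
    proof (cases "x \<in> R")
      case True
      then obtain n where "x \<in> S n"
        using cover by blast
      then have "ennreal (indicator R x * f x) = (\<Sum>i\<in>{n}. ennreal (indicator (S i) x * f x))"
        using True by simp
      also have "\<dots> \<le> (\<Sum>i. ennreal (indicator (S i) x * f x))"
        by (intro sum_le_suminf) auto
      finally show ?thesis .
    qed simp
  qed
  also have "\<dots> = (\<Sum>n. \<integral>\<^sup>+x. ennreal (indicator (S n) x * f x) \<partial>M)"
    by (intro nn_integral_suminf) measurable
  finally show ?thesis .
qed

lemma nn_integral_powr_geometric_shells_le:
  fixes q r c :: real and R :: "'a::euclidean_space set"
  assumes "0 < r" "0 < c" "c powr (real DIM('a) - q) < 1"
    and cover: "\<And>z. z \<in> R \<Longrightarrow> \<exists>n. r * c ^ n < norm z \<and> norm z \<le> 2 * (r * c ^ n)"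
  shows "(\<integral>\<^sup>+z. ennreal (indicator R z * norm z powr (-q)) \<partial>lborel)
           \<le> ennreal (dyadic_shell_const DIM('a) q / (1 - c powr (real DIM('a) - q)) * r powr (real DIM('a) - q))"
proof -
  define e where "e = real DIM('a) - q"
  define K where "K = dyadic_shell_const DIM('a) q"
  define S where "S n = {z::'a. r * c ^ n < norm z \<and> norm z \<le> 2 * (r * c ^ n)}" for n
  have "(r * c ^ n) powr e = r powr e * (c powr real n) powr e" for n
    using assms by (simp add: powr_mult powr_realpow)
  also have "(c powr real n) powr e = (c powr e) ^ n" for n
    using assms by (simp add: powr_powr powr_power mult.commute)
  finally have radius_powr: "(r * c ^ n) powr e = r powr e * (c powr e) ^ n" for n .
  have "(\<lambda>n. (c powr e) ^ n) sums (1 / (1 - c powr e))"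
    using assms(3) by (intro geometric_sums) (simp add: e_def)
  then have "(\<lambda>n. K * r powr e * (c powr e) ^ n) sums (K * r powr e * (1 / (1 - c powr e)))"
    by (rule sums_mult)
  then have sums: "(\<lambda>n. K * (r * c ^ n) powr e) sums (K * r powr e / (1 - c powr e))"
    unfolding radius_powr by (simp add: mult.assoc)
  have "(\<integral>\<^sup>+z. ennreal (indicator R z * norm z powr (-q)) \<partial>lborel)
      \<le> (\<Sum>n. \<integral>\<^sup>+z. ennreal (indicator (S n) z * norm z powr (-q)) \<partial>lborel)"
    using cover by (intro nn_integral_indicator_le_suminf) (auto simp: S_def)
  also have "\<dots> \<le> (\<Sum>n. ennreal (K * (r * c ^ n) powr e))"
    using nn_integral_powr_dyadic_shell_le[of "r * c ^ _" q] assms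
    by (intro suminf_le) (auto simp: S_def K_def e_def)
  also have "\<dots> = ennreal (\<Sum>n. K * (r * c ^ n) powr e)"
    using sums_summable[OF sums] by (intro suminf_ennreal2) (auto simp: K_def dyadic_shell_const_def)
  also have "(\<Sum>n. K * (r * c ^ n) powr e) = K * r powr e / (1 - c powr e)"
    using sums by (rule sums_unique[symmetric])
  finally show ?thesis
    by (simp add: K_def e_def)
qed

lemma ex_dyadic_shell_below:
  fixes r t :: real
  assumes "0 < t" "t \<le> r"
  shows "\<exists>n. r / 2 * (1 / 2) ^ n < t \<and> t \<le> 2 * (r / 2 * (1 / 2) ^ n)"
proof -
  obtain m where "r / t < 2 ^ m"
    using real_arch_pow[of 2 "r / t"] by auto
  then have ex: "r / 2 ^ m < t"
    using assms by (simp add: field_simps)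
  define M where "M = (LEAST m. r / 2 ^ m < t)"
  have M: "r / 2 ^ M < t"
    unfolding M_def by (rule LeastI[of _ m]) (rule ex)
  then obtain n where n: "M = Suc n"
    using assms by (cases M) auto
  have "\<not> r / 2 ^ n < t"
    using not_less_Least[of n "\<lambda>m. r / 2 ^ m < t"] n M_def by auto
  then show ?thesis
    using M n by (intro exI[of _ n]) (auto simp: field_simps power_divide)
qed

lemma ex_dyadic_shell_above:
  fixes r t :: real
  assumes "0 < r" "r < t"
  shows "\<exists>n. r * 2 ^ n < t \<and> t \<le> 2 * (r * 2 ^ n)"
proof -
  obtain m where "t / r < 2 ^ m"
    using real_arch_pow[of 2 "t / r"] by auto
  then have ex: "t \<le> r * 2 ^ m"
    using assms by (simp add: field_simps)
  define M where "M = (LEAST m. t \<le> r * 2 ^ m)"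
  have M: "t \<le> r * 2 ^ M"
    unfolding M_def by (rule LeastI[of _ m]) (rule ex)
  then obtain n where n: "M = Suc n"
    using assms by (cases M) auto
  have "\<not> t \<le> r * 2 ^ n"
    using not_less_Least[of n "\<lambda>m. t \<le> r * 2 ^ m"] n M_def by auto
  then show ?thesis
    using M n by (intro exI[of _ n]) (auto simp: mult_ac)
qed

lemma integrable_integral_le_of_nn_integral_le:
  fixes f :: "'a \<Rightarrow> real"
  assumes "f \<in> borel_measurable M" "\<And>x. 0 \<le> f x" "0 \<le> B"
    and bound: "(\<integral>\<^sup>+x. ennreal (f x) \<partial>M) \<le> ennreal B"
  shows integrable_of_nn_integral_le: "integrable M f"
    and integral_le_of_nn_integral_le: "integral\<^sup>L M f \<le> B"
proof -
  show int: "integrable M f"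
    using assms by (intro integrableI_bounded) (auto simp: top_unique intro: le_less_trans)
  have "ennreal (integral\<^sup>L M f) = (\<integral>\<^sup>+x. ennreal (f x) \<partial>M)"
    using nn_integral_eq_integral[OF int] assms(2) by simp
  then have "ennreal (integral\<^sup>L M f) \<le> ennreal B"
    using bound by simp
  then show "integral\<^sup>L M f \<le> B"
    using assms(3) by (simp add: ennreal_le_iff)
qed

lemma powr_integral_near_origin:
  fixes q r :: real
  assumes "q < real DIM('a)" "0 < r"
  shows integrable_powr_near_origin:
      "integrable lborel (\<lambda>z::'a::euclidean_space. indicator {z. 0 < norm z \<and> norm z \<le> r} z * norm z powr (-q))"
    and integral_powr_near_origin_le:
      "(\<integral>z. indicator {z::'a. 0 < norm z \<and> norm z \<le> r} z * norm z powr (-q) \<partial>lborel)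
         \<le> dyadic_shell_const DIM('a) q / (2 powr (real DIM('a) - q) - 1)
             * r powr (real DIM('a) - q)"
proof -
  define e where "e = real DIM('a) - q"
  define K where "K = dyadic_shell_const DIM('a) q"
  have "(1 / 2 :: real) powr e < 1 powr e"
    using assms(1) by (intro powr_less_mono2) (auto simp: e_def)
  then have half: "(1 / 2 :: real) powr e < 1"
    by simp
  have two: "1 < (2::real) powr e"
    using assms(1) by (simp add: e_def)
  have cover: "\<exists>n. r / 2 * (1 / 2) ^ n < norm z \<and> norm z \<le> 2 * (r / 2 * (1 / 2) ^ n)"
    if "z \<in> {z::'a. 0 < norm z \<and> norm z \<le> r}" for z
    using that by (intro ex_dyadic_shell_below) auto
  have "K / (1 - (1 / 2) powr e) * (r / 2) powr e = K / (2 powr e - 1) * r powr e"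
    using two by (simp add: powr_divide field_simps)
  then have "(\<integral>\<^sup>+z. ennreal (indicator {z::'a. 0 < norm z \<and> norm z \<le> r} z * norm z powr (-q)) \<partial>lborel)
      \<le> ennreal (K / (2 powr e - 1) * r powr e)"
    using nn_integral_powr_geometric_shells_le[of "r / 2" "1 / 2" q "{z::'a. 0 < norm z \<and> norm z \<le> r}",
        OF _ _ _ cover] assms half
    by (simp add: K_def e_def)
  moreover have "0 \<le> K / (2 powr e - 1) * r powr e"
    using two by (simp add: K_def dyadic_shell_const_def)
  ultimately show "integrable lborel (\<lambda>z::'a. indicator {z. 0 < norm z \<and> norm z \<le> r} z * norm z powr (-q))"
    and "(\<integral>z. indicator {z::'a. 0 < norm z \<and> norm z \<le> r} z * norm z powr (-q) \<partial>lborel)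
           \<le> dyadic_shell_const DIM('a) q / (2 powr (real DIM('a) - q) - 1)
               * r powr (real DIM('a) - q)"
    unfolding K_def e_def by (auto intro: integrable_integral_le_of_nn_integral_le)
qed

lemma powr_integral_away_from_origin:
  fixes q r :: real
  assumes "real DIM('a) < q" "0 < r"
  shows integrable_powr_away_from_origin:
      "integrable lborel (\<lambda>z::'a::euclidean_space. indicator {z. r < norm z} z * norm z powr (-q))"
    and integral_powr_away_from_origin_le:
      "(\<integral>z. indicator {z::'a. r < norm z} z * norm z powr (-q) \<partial>lborel)
         \<le> dyadic_shell_const DIM('a) q / (1 - 2 powr (real DIM('a) - q))
             * r powr (real DIM('a) - q)"
proof -
  define e where "e = real DIM('a) - q"
  define K where "K = dyadic_shell_const DIM('a) q"
  have two: "(2::real) powr e < 1"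
    using assms(1) by (intro powr_less_one) (auto simp: e_def)
  have cover: "\<exists>n. r * 2 ^ n < norm z \<and> norm z \<le> 2 * (r * 2 ^ n)" if "z \<in> {z::'a. r < norm z}" for z
    using that assms(2) by (intro ex_dyadic_shell_above) auto
  have "(\<integral>\<^sup>+z. ennreal (indicator {z::'a. r < norm z} z * norm z powr (-q)) \<partial>lborel)
      \<le> ennreal (K / (1 - 2 powr e) * r powr e)"
    using nn_integral_powr_geometric_shells_le[of r 2 q "{z::'a. r < norm z}", OF _ _ _ cover] assms two
    by (simp add: K_def e_def)
  moreover have "0 \<le> K / (1 - 2 powr e) * r powr e"
    using two by (simp add: K_def dyadic_shell_const_def)
  ultimately show "integrable lborel (\<lambda>z::'a. indicator {z. r < norm z} z * norm z powr (-q))"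
    and "(\<integral>z. indicator {z::'a. r < norm z} z * norm z powr (-q) \<partial>lborel)
           \<le> dyadic_shell_const DIM('a) q / (1 - 2 powr (real DIM('a) - q))
               * r powr (real DIM('a) - q)"
    unfolding K_def e_def by (auto intro: integrable_integral_le_of_nn_integral_le)
qed

section \<open>The fractional Laplacian as an integral of second differences\<close>

lemma lborel_affine_isometry:
  fixes f :: "'a::euclidean_space \<Rightarrow> real" and c :: real
  assumes [measurable]: "f \<in> borel_measurable borel" and c: "\<bar>c\<bar> = 1"
  shows integrable_lborel_affine_isometry_iff:
      "integrable lborel (\<lambda>z. f (x + c *\<^sub>R z)) \<longleftrightarrow> integrable lborel f"
    and integral_lborel_affine_isometry:
      "(\<integral>z. f (x + c *\<^sub>R z) \<partial>lborel) = integral\<^sup>L lborel f"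
proof -
  have distr: "distr lborel borel (\<lambda>z. x + c *\<^sub>R z) = (lborel :: 'a measure)"
    using lborel_affine[of c x] c by (simp add: density_1)
  show "integrable lborel (\<lambda>z. f (x + c *\<^sub>R z)) \<longleftrightarrow> integrable lborel f"
    using integrable_distr_eq[of "\<lambda>z. x + c *\<^sub>R z" lborel borel f] by (simp add: distr)
  show "(\<integral>z. f (x + c *\<^sub>R z) \<partial>lborel) = integral\<^sup>L lborel f"
    using integral_distr[of "\<lambda>z. x + c *\<^sub>R z" lborel borel f] by (simp add: distr)
qed

definition frac_second_difference :: "real \<Rightarrow> ('a::euclidean_space \<Rightarrow> real) \<Rightarrow> 'a \<Rightarrow> 'a \<Rightarrow> real" where
  "frac_second_difference s u x z = (u (x + z) + u (x - z) - 2 * u x) / norm z powr (real DIM('a) + 2 * s)"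

lemma frac_trunc_eq_second_difference:
  fixes u :: "'a::euclidean_space \<Rightarrow> real"
  assumes [measurable]: "u \<in> borel_measurable borel"
    and int: "integrable lborel (\<lambda>z. indicator {z. eps < norm z} z * ((u (x + z) - u x) / norm z powr (real DIM('a) + 2 * s)))"
  shows "frac_trunc s u x eps = (\<integral>z. indicator {z. eps < norm z} z * frac_second_difference s u x z \<partial>lborel) / 2"
proof -
  define f where "f y = indicator {y. eps < dist x y} y * ((u y - u x) / dist x y powr (real DIM('a) + 2 * s))"
    for y
  have [measurable]: "f \<in> borel_measurable borel"
    unfolding f_def by measurable
  have f_plus: "f (x + z) = indicator {z. eps < norm z} z * ((u (x + z) - u x) / norm z powr (real DIM('a) + 2 * s))"
    for z
    by (simp add: f_def dist_norm indicator_def)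
  have f_minus: "f (x - z) = indicator {z. eps < norm z} z * ((u (x - z) - u x) / norm z powr (real DIM('a) + 2 * s))"
    for z
    by (simp add: f_def dist_norm norm_minus_commute indicator_def)
  have int_plus: "integrable lborel (\<lambda>z. f (x + z))"
    using int by (simp add: f_plus)
  then have int_minus: "integrable lborel (\<lambda>z. f (x - z))"
    using integrable_lborel_affine_isometry_iff[of f 1 x] integrable_lborel_affine_isometry_iff[of f "-1" x]
    by simp
  have "frac_trunc s u x eps = integral\<^sup>L lborel f"
    unfolding frac_trunc_def set_lebesgue_integral_def f_def[abs_def] by simp
  also have "\<dots> = ((\<integral>z. f (x + z) \<partial>lborel) + (\<integral>z. f (x - z) \<partial>lborel)) / 2"
    using integral_lborel_affine_isometry[of f 1 x] integral_lborel_affine_isometry[of f "-1" x] by simp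
  also have "\<dots> = (\<integral>z. f (x + z) + f (x - z) \<partial>lborel) / 2"
    using int_plus int_minus by simp
  also have "(\<lambda>z. f (x + z) + f (x - z)) = (\<lambda>z. indicator {z. eps < norm z} z * frac_second_difference s u x z)"
    unfolding f_plus f_minus frac_second_difference_def
    by (simp add: diff_divide_distrib add_divide_distrib algebra_simps)
  finally show ?thesis .
qed

lemma tendsto_integral_indicator_norm_gt:
  fixes G :: "'a::euclidean_space \<Rightarrow> real"
  assumes int: "integrable lborel G"
  shows "((\<lambda>eps. \<integral>z. indicator {z. eps < norm z} z * G z \<partial>lborel) \<longlongrightarrow> integral\<^sup>L lborel G) (at_right 0)"
proof (rule tendsto_at_right_sequentially[of 0 1])
  have [measurable]: "G \<in> borel_measurable lborel"
    using int by (rule borel_measurable_integrable)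
  fix S :: "nat \<Rightarrow> real"
  assume S: "\<And>n. 0 < S n" "S \<longlonglongrightarrow> 0"
  show "(\<lambda>n. \<integral>z. indicator {z. S n < norm z} z * G z \<partial>lborel) \<longlonglongrightarrow> integral\<^sup>L lborel G"
  proof (rule integral_dominated_convergence[where w="\<lambda>z. norm (G z)"])
    show "AE z in lborel. (\<lambda>n. indicator {z. S n < norm z} z * G z) \<longlonglongrightarrow> G z"
      using AE_lborel_singleton[of 0]
    proof eventually_elim
      case (elim z)
      then have "\<forall>\<^sub>F n in sequentially. S n < norm z"
        using S(2) by (intro order_tendstoD(2)) auto
      then show ?case
        by (rule tendsto_eventually[OF eventually_mono]) simp
    qed
    show "AE z in lborel. norm (indicator {z. S n < norm z} z * G z) \<le> norm (G z)" for n
      by (simp add: indicator_def)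
  qed (use int in auto)
qed simp

lemma neg_frac_laplacian_eq_integral_second_difference:
  fixes u :: "'a::euclidean_space \<Rightarrow> real"
  assumes "u \<in> borel_measurable borel"
    and "\<And>eps. 0 < eps \<Longrightarrow> integrable lborel
           (\<lambda>z. indicator {z. eps < norm z} z * ((u (x + z) - u x) / norm z powr (real DIM('a) + 2 * s)))"
    and "integrable lborel (frac_second_difference s u x)"
  shows "neg_frac_laplacian s u x = frac_const DIM('a) s * (integral\<^sup>L lborel (frac_second_difference s u x) / 2)"
proof -
  have "((\<lambda>eps. (\<integral>z. indicator {z. eps < norm z} z * frac_second_difference s u x z \<partial>lborel) / 2)
      \<longlongrightarrow> integral\<^sup>L lborel (frac_second_difference s u x) / 2) (at_right 0)"
    using tendsto_integral_indicator_norm_gt[OF assms(3)] by (rule tendsto_divide) simp_all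
  moreover have "\<forall>\<^sub>F eps in at_right 0. (\<integral>z. indicator {z. eps < norm z} z * frac_second_difference s u x z \<partial>lborel) / 2
      = frac_trunc s u x eps"
    using eventually_at_right_less[of 0]
    by eventually_elim (simp add: frac_trunc_eq_second_difference[OF assms(1,2)])
  ultimately have "(frac_trunc s u x \<longlongrightarrow> integral\<^sup>L lborel (frac_second_difference s u x) / 2) (at_right 0)"
    by (rule Lim_transform_eventually)
  then show ?thesis
    unfolding neg_frac_laplacian_def by (simp add: tendsto_Lim)
qed

lemma frac_const_nonneg: "0 < s \<Longrightarrow> 0 \<le> frac_const d s"
  unfolding frac_const_def by (intro divide_nonneg_nonneg mult_nonneg_nonneg less_imp_le[OF Gamma_real_pos]) auto

lemma abs_divide_powr_le:
  fixes t :: real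
  assumes "0 < t" "\<bar>D\<bar> \<le> c * t powr a"
  shows "\<bar>D / t powr p\<bar> \<le> c * t powr (-(p - a))"
proof -
  have "\<bar>D / t powr p\<bar> = \<bar>D\<bar> / t powr p"
    by (simp add: abs_divide)
  also have "\<dots> \<le> c * t powr a / t powr p"
    using assms by (intro divide_right_mono) auto
  also have "\<dots> = c * t powr (-(p - a))"
    by (simp add: powr_diff)
  finally show ?thesis .
qed

lemma integrable_truncated_difference_jbracket_powr:
  fixes x :: "'a::euclidean_space"
  assumes "0 \<le> k" "k < 2 * s" "0 < eps"
  shows "integrable lborel (\<lambda>z. indicator {z. eps < norm z} z
           * ((jbracket (x + z) powr k - jbracket x powr k) / norm z powr (real DIM('a) + 2 * s)))"
proof -
  define F where "F z = indicator {z. eps < norm z} z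
    * ((jbracket (x + z) powr k - jbracket x powr k) / norm z powr (real DIM('a) + 2 * s))" for z
  define g where "g z = (jbracket x / eps + 1) powr k
    * (indicator {z::'a. eps < norm z} z * norm z powr (-(real DIM('a) + 2 * s - k)))" for z
  have g_int: "integrable lborel g"
    using integrable_powr_away_from_origin[where 'a='a and q="real DIM('a) + 2 * s - k" and r=eps] assms
    by (simp add: g_def[abs_def])
  have bound: "\<bar>F z\<bar> \<le> g z" for z
  proof (cases "eps < norm z")
    case True
    have "\<bar>jbracket (x + z) powr k - jbracket x powr k\<bar> \<le> (jbracket x / eps + 1) powr k * norm z powr k"
      using jbracket_powr_difference_le[of k eps z x] assms True by (simp add: powr_mult)
    then have "\<bar>(jbracket (x + z) powr k - jbracket x powr k) / norm z powr (real DIM('a) + 2 * s)\<bar>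
        \<le> (jbracket x / eps + 1) powr k * norm z powr (-(real DIM('a) + 2 * s - k))"
      using True assms by (intro abs_divide_powr_le) auto
    then show ?thesis
      using True by (simp add: F_def g_def)
  qed (simp add: F_def g_def)
  have "F \<in> borel_measurable lborel"
    unfolding F_def by measurable
  moreover have "AE z in lborel. norm (F z) \<le> norm (g z)"
    using bound by (auto intro!: AE_I2 intro: order_trans[OF _ abs_ge_self])
  ultimately have "integrable lborel F"
    by (rule Bochner_Integration.integrable_bound[OF g_int])
  then show ?thesis
    unfolding F_def[abs_def] .
qed

lemma abs_frac_second_difference_jbracket_powr_le:
  fixes x z :: "'a::euclidean_space"
  assumes "0 < k" "k < 2"
  shows "\<bar>frac_second_difference s (\<lambda>y. jbracket y powr k) x z\<bar>
     \<le> 40 * jbracket x powr (k - 2)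
          * (indicator {z. 0 < norm z \<and> norm z \<le> jbracket x / 2} z * norm z powr (-(real DIM('a) + 2 * s - 2)))
       + 2 * 3 powr k * (indicator {z. jbracket x / 2 < norm z} z * norm z powr (-(real DIM('a) + 2 * s - k)))"
proof -
  consider "z = 0" | "0 < norm z" "norm z \<le> jbracket x / 2" | "jbracket x / 2 < norm z"
    by fastforce
  then show ?thesis
  proof cases
    case 1
    then show ?thesis
      by (simp add: frac_second_difference_def)
  next
    case 2
    then have "\<bar>frac_second_difference s (\<lambda>y. jbracket y powr k) x z\<bar>
        \<le> 40 * jbracket x powr (k - 2) * norm z powr (-(real DIM('a) + 2 * s - 2))"
      using jbracket_powr_second_difference_near[of k z x] assms
      unfolding frac_second_difference_def by (intro abs_divide_powr_le) simp_all
    then show ?thesis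
      using 2 by simp
  next
    case 3
    have "0 < norm z"
      using 3 jbracket_pos[of x] by linarith
    moreover have "\<bar>jbracket (x + z) powr k + jbracket (x - z) powr k - 2 * jbracket x powr k\<bar>
        \<le> 2 * 3 powr k * norm z powr k"
      using jbracket_powr_second_difference_far[of k x z] assms 3 by (simp add: powr_mult)
    ultimately have "\<bar>frac_second_difference s (\<lambda>y. jbracket y powr k) x z\<bar>
        \<le> 2 * 3 powr k * norm z powr (-(real DIM('a) + 2 * s - k))"
      unfolding frac_second_difference_def by (rule abs_divide_powr_le)
    then show ?thesis
      using 3 jbracket_pos[of x] by simp
  qed
qed

lemma frac_second_difference_jbracket_powr_integral:
  fixes x :: "'a::euclidean_space"
  assumes "s < 1" "0 < k" "k < 2 * s"
  defines "C_near \<equiv> dyadic_shell_const DIM('a) (real DIM('a) + 2 * s - 2) / (2 powr (2 - 2 * s) - 1)"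
    and "C_far \<equiv> dyadic_shell_const DIM('a) (real DIM('a) + 2 * s - k) / (1 - 2 powr (k - 2 * s))"
  shows integrable_frac_second_difference_jbracket_powr:
      "integrable lborel (frac_second_difference s (\<lambda>y. jbracket y powr k) x)"
    and integral_frac_second_difference_jbracket_powr_le:
      "integral\<^sup>L lborel (frac_second_difference s (\<lambda>y. jbracket y powr k) x)
         \<le> (40 * C_near / 2 powr (2 - 2 * s) + 2 * 3 powr k * C_far / 2 powr (k - 2 * s)) * jbracket x powr (k - 2 * s)"
proof -
  define L where "L = jbracket x"
  define g_near where
    "g_near z = indicator {z::'a. 0 < norm z \<and> norm z \<le> L / 2} z * norm z powr (-(real DIM('a) + 2 * s - 2))"
    for z
  define g_far where
    "g_far z = indicator {z::'a. L / 2 < norm z} z * norm z powr (-(real DIM('a) + 2 * s - k))"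
    for z
  define H where "H z = 40 * L powr (k - 2) * g_near z + 2 * 3 powr k * g_far z" for z
  have L: "0 < L / 2"
    by (simp add: L_def jbracket_pos)
  have near: "integrable lborel g_near" "integral\<^sup>L lborel g_near \<le> C_near * (L / 2) powr (2 - 2 * s)"
    using powr_integral_near_origin[where 'a='a and q="real DIM('a) + 2 * s - 2" and r="L / 2"] L assms(1)
    by (simp_all add: g_near_def[abs_def] C_near_def)
  have far: "integrable lborel g_far" "integral\<^sup>L lborel g_far \<le> C_far * (L / 2) powr (k - 2 * s)"
    using powr_integral_away_from_origin[where 'a='a and q="real DIM('a) + 2 * s - k" and r="L / 2"] L assms(3)
    by (simp_all add: g_far_def[abs_def] C_far_def)
  have H_int: "integrable lborel H"
    using near(1) far(1) by (simp add: H_def[abs_def])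
  have bound: "\<bar>frac_second_difference s (\<lambda>y. jbracket y powr k) x z\<bar> \<le> H z" for z
    using abs_frac_second_difference_jbracket_powr_le[of k s x z] assms(1-3)
    by (simp add: H_def g_near_def g_far_def L_def)
  have "frac_second_difference s (\<lambda>y. jbracket y powr k) x \<in> borel_measurable lborel"
    unfolding frac_second_difference_def by measurable
  moreover have "AE z in lborel. norm (frac_second_difference s (\<lambda>y. jbracket y powr k) x z) \<le> norm (H z)"
    using bound by (auto intro!: AE_I2 intro: order_trans[OF _ abs_ge_self])
  ultimately show int: "integrable lborel (frac_second_difference s (\<lambda>y. jbracket y powr k) x)"
    by (rule Bochner_Integration.integrable_bound[OF H_int])
  have "integral\<^sup>L lborel (frac_second_difference s (\<lambda>y. jbracket y powr k) x) \<le> integral\<^sup>L lborel H"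
    using int H_int bound by (intro integral_mono) (auto simp: abs_le_iff)
  also have "\<dots> = 40 * L powr (k - 2) * integral\<^sup>L lborel g_near + 2 * 3 powr k * integral\<^sup>L lborel g_far"
    using near(1) far(1) by (simp add: H_def[abs_def])
  also have "\<dots> \<le> 40 * L powr (k - 2) * (C_near * (L / 2) powr (2 - 2 * s))
      + 2 * 3 powr k * (C_far * (L / 2) powr (k - 2 * s))"
    using near(2) far(2) by (intro add_mono mult_left_mono) auto
  also have "\<dots> = (40 * C_near / 2 powr (2 - 2 * s) + 2 * 3 powr k * C_far / 2 powr (k - 2 * s)) * L powr (k - 2 * s)"
    by (simp add: powr_divide field_simps flip: powr_add)
  finally show "integral\<^sup>L lborel (frac_second_difference s (\<lambda>y. jbracket y powr k) x)
      \<le> (40 * C_near / 2 powr (2 - 2 * s) + 2 * 3 powr k * C_far / 2 powr (k - 2 * s)) * jbracket x powr (k - 2 * s)"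
    unfolding L_def .
qed

lemma neg_frac_laplacian_jbracket_powr_le:
  assumes "0 < s" "s < 1" "0 < k" "k < 2 * s"
  obtains C where
    "\<And>x::'a::euclidean_space. neg_frac_laplacian s (\<lambda>y. jbracket y powr k) x \<le> C * jbracket x powr (k - 2 * s)"
proof -
  obtain C where C: "\<And>x::'a. integral\<^sup>L lborel (frac_second_difference s (\<lambda>y. jbracket y powr k) x)
      \<le> C * jbracket x powr (k - 2 * s)"
    using integral_frac_second_difference_jbracket_powr_le[OF assms(2-4)] by blast
  have "neg_frac_laplacian s (\<lambda>y. jbracket y powr k) x \<le> frac_const DIM('a) s / 2 * C * jbracket x powr (k - 2 * s)"
    for x :: 'a
  proof -
    have "neg_frac_laplacian s (\<lambda>y. jbracket y powr k) x
        = frac_const DIM('a) s * (integral\<^sup>L lborel (frac_second_difference s (\<lambda>y. jbracket y powr k) x) / 2)"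
      using assms integrable_frac_second_difference_jbracket_powr[of s k x]
        integrable_truncated_difference_jbracket_powr[of k s]
      by (intro neg_frac_laplacian_eq_integral_second_difference) auto
    also have "\<dots> \<le> frac_const DIM('a) s / 2 * C * jbracket x powr (k - 2 * s)"
      using mult_left_mono[OF C[of x] frac_const_nonneg[OF assms(1)]] by (simp add: mult.assoc)
    finally show ?thesis .
  qed
  then show thesis
    by (rule that)
qed

theorem proposition3p3:
  fixes s k :: real
  assumes "0 < s" and "s < 1" and "0 < k" and "k < 2 * s"
  shows "\<exists>C>0. \<forall>x::'a::euclidean_space.
           neg_frac_laplacian s (\<lambda>y. jbracket y powr k) x
             \<le> C * jbracket x powr (k - 2 * s) * (1 + 1 / (2 * s) + 1 / (2 * s - k))"
proof -
  obtain C where C: "\<And>x::'a. neg_frac_laplacian s (\<lambda>y. jbracket y powr k) x \<le> C * jbracket x powr (k - 2 * s)"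
    using neg_frac_laplacian_jbracket_powr_le[OF assms] by blast
  have factor: "1 \<le> 1 + 1 / (2 * s) + 1 / (2 * s - k)"
    using assms by simp
  have "C * jbracket x powr (k - 2 * s)
      \<le> (\<bar>C\<bar> + 1) * jbracket x powr (k - 2 * s) * (1 + 1 / (2 * s) + 1 / (2 * s - k))" for x :: 'a
  proof -
    have "C * jbracket x powr (k - 2 * s) \<le> (\<bar>C\<bar> + 1) * jbracket x powr (k - 2 * s)"
      by (intro mult_right_mono) auto
    also have "\<dots> \<le> (\<bar>C\<bar> + 1) * jbracket x powr (k - 2 * s) * (1 + 1 / (2 * s) + 1 / (2 * s - k))"
      using mult_left_mono[OF factor, of "(\<bar>C\<bar> + 1) * jbracket x powr (k - 2 * s)"] by simp
    finally show ?thesis .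
  qed
  then show ?thesis
    using C by (intro exI[of _ "\<bar>C\<bar> + 1"]) (auto intro: order_trans)
qed

end
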